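(* Let $K:\mathbb B_d\times\mathbb B_d\to\mathcal M_n(\mathbb C)$ be a non-negative definite kernel which is invariant under $\mathcal U(d)$, i.e. $K(u\cdot\boldsymbol z,u\cdot\boldsymbol w)=K(\boldsymbol z,\boldsymbol w)$ for all $u\in\mathcal U(d)$ and $\boldsymbol z,\boldsymbol w\in\mathbb B_d$. Then $K(\boldsymbol z,\boldsymbol w)=\sum_{\ell=0}^\infty A_\ell\langle\boldsymbol z,\boldsymbol w\rangle^\ell$ for some sequence $\{A_\ell\}_{\ell\in\mathbb Z_+}$ of positive definite $n\times n$ matrices.
   Context: $\mathbb B_d$ is the open unit ball of $\mathbb C^d$, $\mathcal U(d)$ the group of $d\times d$ unitary matrices, $\langle\boldsymbol z,\boldsymbol w\rangle=\sum_iz_i\bar w_i$. Kernels are sesqui-analytic (holomorphic in the first, anti-holomorphic in the second variable). *)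

theory Defs
  imports "HOL-Analysis.Analysis" "HOL-Library.Complex_Order"
begin

abbreviation unit_ball :: "(complex ^ 'd) set" where
  "unit_ball \<equiv> ball 0 1"

definition cinner :: "complex ^ 'd \<Rightarrow> complex ^ 'd \<Rightarrow> complex" where
  "cinner z w = (\<Sum>i\<in>UNIV. z $ i * cnj (w $ i))"

definition adjoint_mat :: "complex ^ 'n ^ 'm \<Rightarrow> complex ^ 'm ^ 'n" where
  "adjoint_mat A = (\<chi> i j. cnj (A $ j $ i))"

definition unitary :: "complex ^ 'd ^ 'd \<Rightarrow> bool" where
  "unitary u \<longleftrightarrow> u ** adjoint_mat u = mat 1"

text \<open>Positive (semi)definite matrix: <A x, x> >= 0 for all x (complex order).\<close>
definition pos_def_mat :: "complex ^ 'n ^ 'n \<Rightarrow> bool" where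
  "pos_def_mat A \<longleftrightarrow> (\<forall>x. 0 \<le> cinner (A *v x) x)"

definition holo_on :: "(complex ^ 'd) set \<Rightarrow> (complex ^ 'd \<Rightarrow> complex) \<Rightarrow> bool" where
  "holo_on S f \<longleftrightarrow> (\<forall>z\<in>S. \<exists>L. (f has_derivative L) (at z) \<and> (\<forall>c v. L (c *s v) = c * L v))"

definition sesqui_analytic ::
  "(complex ^ 'd \<Rightarrow> complex ^ 'd \<Rightarrow> complex ^ 'n ^ 'n) \<Rightarrow> bool" where
  "sesqui_analytic K \<longleftrightarrow>
     (\<forall>w\<in>unit_ball. \<forall>i j. holo_on unit_ball (\<lambda>z. K z w $ i $ j)) \<and>
     (\<forall>z\<in>unit_ball. \<forall>i j. holo_on unit_ball (\<lambda>w. cnj (K z w $ i $ j)))"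

definition nnd_kernel ::
  "(complex ^ 'd \<Rightarrow> complex ^ 'd \<Rightarrow> complex ^ 'n ^ 'n) \<Rightarrow> bool" where
  "nnd_kernel K \<longleftrightarrow>
     (\<forall>(m::nat) (z :: nat \<Rightarrow> complex ^ 'd) (\<xi> :: nat \<Rightarrow> complex ^ 'n).
        (\<forall>p<m. z p \<in> unit_ball) \<longrightarrow>
        0 \<le> (\<Sum>p<m. \<Sum>q<m. cinner (K (z p) (z q) *v \<xi> q) (\<xi> p)))"

end

(*
  Restricted to the line through a coordinate vector e, the kernel becomes a function
  f l m = k (l e) (m e) on the bidisc, holomorphic in l, anti-holomorphic in m and invariant under
  (l, m) |-> (t l, t m) for |t| = 1. By this invariance s |-> f l (m s) and s |-> f (l cnj(s)) m
  agree on the unit circle, hence on a disc around it; comparing Taylor coefficients at 0 gives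
  f l m = sum_n A_n (l cnj(m))^n. A unitary sends w to |w| e, and a phase rotation along the part of
  z orthogonal to e fixes everything else, so analytic continuation in that phase gives
  k z w = f (z_e) |w|, a power series in <z, w>.
  Positivity: evaluating the non-negative definite kernel sum_m a_m (x cnj(y))^m at the points
  omega^p / 2, omega a primitive N-th root of unity, with weights omega^(j q) isolates the sum of
  a_m 4^(-m) over m = j mod N, which is thus non-negative and tends to a_j 4^(-j) as N grows.
*)

theory Submission
  imports Defs "HOL-Complex_Analysis.Conformal_Mappings"
begin

section \<open>The inner product and unitary matrices\<close>

lemma cinner_add_left: "cinner (x + y) w = cinner x w + cinner y w"
  by (simp add: cinner_def sum.distrib algebra_simps)

lemma cinner_diff_left: "cinner (x - y) w = cinner x w - cinner y w"
  by (simp add: cinner_def sum_subtractf algebra_simps)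

lemma cinner_diff_right: "cinner z (x - y) = cinner z x - cinner z y"
  by (simp add: cinner_def sum_subtractf algebra_simps)

lemma cinner_smult_left: "cinner (c *s z) w = c * cinner z w"
  by (simp add: cinner_def sum_distrib_left mult.assoc)

lemma cinner_smult_right: "cinner z (c *s w) = cnj c * cinner z w"
  by (simp add: cinner_def sum_distrib_left algebra_simps)

lemma cnj_cinner: "cnj (cinner z w) = cinner w z"
  by (simp add: cinner_def mult.commute)

lemma cinner_self: "cinner z z = of_real (norm z ^ 2)"
proof -
  have "cinner z z = (\<Sum>i\<in>UNIV. of_real (norm (z $ i) ^ 2))"
    unfolding cinner_def by (intro sum.cong refl) (metis complex_norm_square)
  also have "\<dots> = of_real (norm z ^ 2)"
    by (simp add: norm_vec_def L2_set_def sum_nonneg)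
  finally show ?thesis .
qed

lemma cinner_axis_left: "cinner (axis i c) z = c * cnj (z $ i)"
  by (simp add: cinner_def axis_def if_distrib[where f="\<lambda>x. x * _"] cong: if_cong)

lemma cinner_axis_right: "cinner z (axis i c) = z $ i * cnj c"
  by (simp add: cinner_def axis_def if_distrib cong: if_cong)

lemma norm_eq_iff_cinner_self_eq: "norm z = norm w \<longleftrightarrow> cinner z z = cinner w w"
  unfolding cinner_self by (metis of_real_eq_iff norm_ge_zero power2_eq_iff_nonneg)

lemma cinner_self_eq_0_iff [simp]: "cinner z z = 0 \<longleftrightarrow> z = 0"
  by (simp add: cinner_self)

lemma norm_axis: "norm (axis i c) = cmod c"
proof -
  have "cinner (axis i c) (axis i c) = of_real (cmod c ^ 2)"
    by (simp add: cinner_axis_left flip: complex_norm_square)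
  then show ?thesis
    unfolding cinner_self by (metis of_real_eq_iff norm_ge_zero power2_eq_iff_nonneg)
qed

lemma smult_axis_1: "c *s axis i 1 = axis i (c :: complex)"
  by (auto simp: axis_def vec_eq_iff)

lemma cinner_mult_vec_adjoint: "cinner (A *v z) y = cinner z (adjoint_mat A *v y)"
proof -
  have "cinner (A *v z) y = (\<Sum>i\<in>UNIV. \<Sum>j\<in>UNIV. A $ i $ j * z $ j * cnj (y $ i))"
    by (simp add: cinner_def matrix_vector_mult_def sum_distrib_right)
  also have "\<dots> = (\<Sum>j\<in>UNIV. \<Sum>i\<in>UNIV. A $ i $ j * z $ j * cnj (y $ i))"
    by (rule sum.swap)
  also have "\<dots> = cinner z (adjoint_mat A *v y)"
    by (simp add: cinner_def matrix_vector_mult_def adjoint_mat_def sum_distrib_left mult_ac)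
  finally show ?thesis .
qed

lemma unitary_adjoint_mult: "unitary u \<Longrightarrow> adjoint_mat u ** u = mat 1"
  unfolding unitary_def using matrix_left_right_inverse by blast

lemma unitary_cinner: "unitary u \<Longrightarrow> cinner (u *v z) (u *v w) = cinner z w"
  by (simp add: cinner_mult_vec_adjoint matrix_vector_mul_assoc unitary_adjoint_mult)

lemma unitary_norm: "unitary u \<Longrightarrow> norm (u *v z) = norm z"
  by (simp add: norm_eq_iff_cinner_self_eq unitary_cinner)

lemma adjoint_mat_1: "adjoint_mat (mat 1) = mat 1"
  by (simp add: adjoint_mat_def mat_def vec_eq_iff)

lemma unitary_mat_1: "unitary (mat 1)"
  by (simp add: unitary_def adjoint_mat_1)

(* Multiplication by t on the line spanned by v, the identity on its orthogonal complement. *)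
definition phase_mat :: "complex \<Rightarrow> complex ^ 'd \<Rightarrow> complex ^ 'd ^ 'd" where
  "phase_mat t v =
     (\<chi> i j. (if i = j then 1 else 0) + (t - 1) / cinner v v * v $ i * cnj (v $ j))"

lemma phase_mat_mult_vec:
  "phase_mat t v *v z = z + ((t - 1) / cinner v v * cinner z v) *s v"
proof -
  let ?c = "(t - 1) / cinner v v"
  have "(phase_mat t v *v z) $ i = z $ i + ?c * cinner z v * v $ i" for i
  proof -
    have "(phase_mat t v *v z) $ i =
        (\<Sum>j\<in>UNIV. (if i = j then z $ j else 0) + ?c * v $ i * (z $ j * cnj (v $ j)))"
      unfolding phase_mat_def matrix_vector_mult_def vec_lambda_beta
      by (intro sum.cong) (auto simp: algebra_simps)
    also have "\<dots> = z $ i + ?c * v $ i * cinner z v"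
      by (simp add: sum.distrib sum_distrib_left cinner_def)
    finally show ?thesis by simp
  qed
  then show ?thesis by (simp add: vec_eq_iff)
qed

lemma phase_mat_mult:
  assumes "v \<noteq> 0"
  shows "phase_mat s v ** phase_mat t v = phase_mat (s * t) v"
proof -
  have "phase_mat s v *v (phase_mat t v *v x) = phase_mat (s * t) v *v x" for x
    using assms
    by (simp add: phase_mat_mult_vec cinner_add_left cinner_smult_left vec_eq_iff field_simps)
  then show ?thesis by (simp add: matrix_eq matrix_vector_mul_assoc)
qed

lemma phase_mat_1: "phase_mat 1 v = mat 1"
  by (simp add: phase_mat_def mat_def vec_eq_iff)

lemma adjoint_phase_mat: "adjoint_mat (phase_mat t v) = phase_mat (cnj t) v"
  by (simp add: adjoint_mat_def phase_mat_def vec_eq_iff mult_ac cnj_cinner)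

lemma unitary_phase_mat:
  assumes "cmod t = 1" "v \<noteq> 0"
  shows "unitary (phase_mat t v)"
proof -
  have "t * cnj t = 1" using assms(1) by (simp flip: complex_norm_square)
  then show ?thesis by (simp add: unitary_def adjoint_phase_mat phase_mat_mult assms(2) phase_mat_1)
qed

lemma phase_mat_mult_vec_self:
  assumes "v \<noteq> 0"
  shows "phase_mat t v *v (c *s v) = (t * c) *s v"
  using assms by (simp add: phase_mat_mult_vec cinner_smult_left vec_eq_iff field_simps)

lemma phase_mat_mult_vec_orthogonal: "cinner z v = 0 \<Longrightarrow> phase_mat t v *v z = z"
  by (simp add: phase_mat_mult_vec)

lemma unitary_map_of_norm_eq:
  assumes "norm a = norm b"
  shows "\<exists>u. unitary u \<and> u *v a = b"
proof (cases "a = b")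
  case True
  then show ?thesis using unitary_mat_1 by force
next
  case False
  define v where "v = a - b"
  define X where "X = cinner a v"
  define N where "N = cinner v v"
  have "N \<noteq> 0" using False by (simp add: N_def v_def)
  have "N = X + cnj X"
    using assms
    by (simp add: N_def X_def v_def norm_eq_iff_cinner_self_eq cinner_diff_left cinner_diff_right
        cnj_cinner)
  then have "X \<noteq> 0" using \<open>N \<noteq> 0\<close> by auto
  define t where "t = - cnj X / X"
  have "cmod t = 1" using \<open>X \<noteq> 0\<close> by (simp add: t_def norm_divide)
  have "(t - 1) / N * X = - (cnj X + X) / N"
    using \<open>X \<noteq> 0\<close> by (simp add: t_def divide_simps)
  also have "\<dots> = - N / N"
    using \<open>N = X + cnj X\<close> by (simp only: add.commute[of "cnj X"])
  also have "\<dots> = -1"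
    using \<open>N \<noteq> 0\<close> by simp
  finally have "(t - 1) / N * X = -1" .
  have "phase_mat t v *v a = a + ((t - 1) / N * X) *s v"
    by (simp add: phase_mat_mult_vec N_def X_def)
  also have "\<dots> = b"
    unfolding \<open>(t - 1) / N * X = -1\<close> v_def by (simp add: vec_eq_iff)
  finally show ?thesis using unitary_phase_mat[OF \<open>cmod t = 1\<close>] \<open>N \<noteq> 0\<close> N_def by auto
qed

section \<open>Holomorphy along complex lines\<close>

lemma bounded_linear_smult_vec: "bounded_linear (\<lambda>c::complex. c *s (v :: complex ^ 'd))"
  by (rule linear_conv_bounded_linear[THEN iffD1])
    (simp add: linear_iff vec_eq_iff vector_scaleR_component scaleR_conv_of_real[where 'a=complex]
        algebra_simps)

lemma holomorphic_on_line:
  assumes "holo_on S g" "\<And>l. l \<in> T \<Longrightarrow> a + l *s v \<in> S"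
  shows "(\<lambda>l. g (a + l *s v)) holomorphic_on T"
  unfolding holomorphic_on_def
proof
  fix \<mu> assume "\<mu> \<in> T"
  then obtain L where L: "(g has_derivative L) (at (a + \<mu> *s v))" "\<And>c w. L (c *s w) = c * L w"
    using assms unfolding holo_on_def by blast
  have "((\<lambda>l. a + l *s v) has_derivative (\<lambda>h. h *s v)) (at \<mu>)"
    using has_derivative_add[OF has_derivative_const
        bounded_linear_imp_has_derivative[OF bounded_linear_smult_vec]] by simp
  from diff_chain_at[OF this L(1)]
  have "((\<lambda>l. g (a + l *s v)) has_derivative (\<lambda>h. h * L v)) (at \<mu>)"
    by (simp add: o_def L(2))
  moreover have "(\<lambda>h. h * L v) = (*) (L v)"
    by (simp add: fun_eq_iff mult.commute)
  ultimately have "((\<lambda>l. g (a + l *s v)) has_field_derivative L v) (at \<mu>)"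
    by (simp add: has_field_derivative_def)
  then show "(\<lambda>l. g (a + l *s v)) field_differentiable at \<mu> within T"
    using field_differentiable_at_within field_differentiable_def by blast
qed

lemma open_line_section:
  assumes "open S"
  shows "open {l :: complex. a + l *s v \<in> S}"
proof -
  have "isCont (\<lambda>l. a + l *s v) l" for l
    using linear_continuous_at[OF bounded_linear_smult_vec]
    by (intro continuous_add continuous_const)
  then show ?thesis
    using continuous_open_vimage[OF assms, of "\<lambda>l. a + l *s v"] by (simp add: vimage_def)
qed

lemma convex_line_section: "convex S \<Longrightarrow> convex {l :: complex. a + l *s v \<in> S}"
proof -
  assume "convex S"
  have "{l. a + l *s v \<in> S} = (\<lambda>l. l *s v) -` ((+) (- a) ` S)"
    by (force simp: image_iff algebra_simps)
  then show ?thesis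
    using convex_linear_vimage[OF bounded_linear.linear[OF bounded_linear_smult_vec]]
      convex_translation[OF \<open>convex S\<close>] by metis
qed

lemma holomorphic_eq_on_unit_circle:
  assumes "f holomorphic_on S" "g holomorphic_on S" "open S" "connected S" "sphere 0 1 \<subseteq> S"
    and "\<And>z. cmod z = 1 \<Longrightarrow> f z = g z" and "x \<in> S"
  shows "f x = g x"
proof -
  have "{1, -1} \<subseteq> sphere (0::complex) 1" by simp
  then have "sphere (0::complex) 1 \<noteq> {y}" for y
    by (metis insert_subset singletonD one_neq_neg_one)
  then have "1 islimpt sphere (0::complex) 1"
    by (intro connected_imp_perfect connected_sphere) auto
  have "f x - g x = 0"
  proof (rule analytic_continuation[where f = "\<lambda>z. f z - g z" and U = "sphere 0 1" and \<xi> = 1])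
    show "(\<lambda>z. f z - g z) holomorphic_on S" using assms(1,2) by (rule holomorphic_on_diff)
  qed (use assms \<open>1 islimpt sphere 0 1\<close> in auto)
  then show ?thesis by simp
qed

lemma holomorphic_on_cnj_reflect:
  assumes "g holomorphic_on S" "open S" "\<And>z. z \<in> S \<Longrightarrow> cnj z \<in> S"
  shows "(\<lambda>x. cnj (g (cnj x))) holomorphic_on S"
proof -
  have "g holomorphic_on cnj ` S"
    using assms(1) by (rule holomorphic_on_subset) (auto intro: assms(3))
  from holomorphic_on_compose_cnj_cnj[OF this assms(2)] show ?thesis by (simp add: o_def)
qed

lemma higher_deriv_cnj_cnj:
  assumes G: "G holomorphic_on S" and S: "open S" and sym: "\<And>z. z \<in> S \<Longrightarrow> cnj z \<in> S"
    and z: "z \<in> S"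
  shows "(deriv ^^ n) (\<lambda>s. cnj (G (cnj s))) z = cnj ((deriv ^^ n) G (cnj z))"
  using z
proof (induction n arbitrary: z)
  case 0 then show ?case by simp
next
  case (Suc n z)
  have "(deriv ^^ Suc n) (\<lambda>s. cnj (G (cnj s))) z = deriv (\<lambda>s. cnj ((deriv ^^ n) G (cnj s))) z"
    using Suc.IH
    by (auto intro!: complex_derivative_transform_within_open[OF _ _ S Suc.prems]
        holomorphic_higher_deriv holomorphic_on_cnj_reflect G S sym)
  also have "\<dots> = cnj (deriv ((deriv ^^ n) G) (cnj z))"
  proof -
    have "((deriv ^^ n) G has_field_derivative deriv ((deriv ^^ n) G) (cnj z)) (at (cnj z))"
      by (rule holomorphic_derivI[OF holomorphic_higher_deriv[OF G S] S sym[OF Suc.prems]])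
    from has_field_derivative_cnj_cnj[OF this] show ?thesis by (simp add: o_def DERIV_imp_deriv)
  qed
  finally show ?case by simp
qed

section \<open>Circle-invariant kernels on the disc\<close>

lemma norm_less_one_of_scaled_le:
  assumes "cmod c * r \<le> 1" "1 < r"
  shows "cmod c < 1"
proof (rule ccontr)
  assume "\<not> cmod c < 1"
  then have "1 * r \<le> cmod c * r" using assms(2) by (intro mult_right_mono) auto
  then show False using assms by linarith
qed

lemma dilate_in_unit_ball:
  assumes "cmod c * r \<le> 1" "cmod x < r"
  shows "cmod (c * x) < 1"
proof (cases "c = 0")
  case False
  then have "cmod c * cmod x < cmod c * r" using assms(2) by simp
  then show ?thesis using assms(1) by (simp add: norm_mult)
qed simp

lemma holomorphic_on_dilate:
  assumes "g holomorphic_on ball 0 1" "cmod c * r \<le> 1"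
  shows "(\<lambda>x. g (c * x)) holomorphic_on ball 0 r"
proof -
  have "(*) c ` ball 0 r \<subseteq> ball 0 1" using dilate_in_unit_ball[OF assms(2)] by auto
  from holomorphic_on_compose_gen[OF _ assms(1) this] show ?thesis
    by (simp add: o_def holomorphic_intros)
qed

locale circle_invariant_disc_kernel =
  fixes f :: "complex \<Rightarrow> complex \<Rightarrow> complex"
  assumes holomorphic_left: "cmod m < 1 \<Longrightarrow> (\<lambda>l. f l m) holomorphic_on ball 0 1"
    and holomorphic_right_cnj: "cmod l < 1 \<Longrightarrow> (\<lambda>m. cnj (f l m)) holomorphic_on ball 0 1"
    and circle_invariant:
      "cmod t = 1 \<Longrightarrow> cmod l < 1 \<Longrightarrow> cmod m < 1 \<Longrightarrow> f (t * l) (t * m) = f l m"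
begin

lemma
  assumes "cmod l * r \<le> 1" "cmod m * r \<le> 1" "1 < r"
  shows holomorphic_on_dilate_right_cnj: "(\<lambda>x. cnj (f l (m * x))) holomorphic_on ball 0 r"
    and holomorphic_on_dilate_reflect_left: "(\<lambda>x. cnj (f (l * cnj x) m)) holomorphic_on ball 0 r"
    and holomorphic_on_dilate_left: "(\<lambda>x. f (l * x) m) holomorphic_on ball 0 r"
proof -
  have "cmod l < 1" "cmod m < 1"
    using norm_less_one_of_scaled_le[OF assms(1,3)] norm_less_one_of_scaled_le[OF assms(2,3)] .
  then show "(\<lambda>x. cnj (f l (m * x))) holomorphic_on ball 0 r"
    and left: "(\<lambda>x. f (l * x) m) holomorphic_on ball 0 r"
    using holomorphic_on_dilate[OF holomorphic_right_cnj assms(2)]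
      holomorphic_on_dilate[OF holomorphic_left assms(1)] by auto
  from holomorphic_on_cnj_reflect[OF left open_ball]
  show "(\<lambda>x. cnj (f (l * cnj x) m)) holomorphic_on ball 0 r" by simp
qed

lemma invariance_off_circle:
  assumes "cmod l * r \<le> 1" "cmod m * r \<le> 1" "1 < r" "cmod s < r"
  shows "f l (m * s) = f (l * cnj s) m"
proof -
  have "cmod l < 1" "cmod m < 1"
    using norm_less_one_of_scaled_le[OF assms(1,3)] norm_less_one_of_scaled_le[OF assms(2,3)] .
  have "cnj (f l (m * s)) = cnj (f (l * cnj s) m)"
  proof (rule holomorphic_eq_on_unit_circle[OF holomorphic_on_dilate_right_cnj
        holomorphic_on_dilate_reflect_left, OF assms(1-3) assms(1-3)])
    fix z :: complex assume "cmod z = 1"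
    then have "z * cnj z = 1" by (simp flip: complex_norm_square)
    then have "f l (m * z) = f (z * (l * cnj z)) (z * m)" by (simp add: ac_simps)
    also have "\<dots> = f (l * cnj z) m"
      using \<open>cmod z = 1\<close> \<open>cmod l < 1\<close> \<open>cmod m < 1\<close>
      by (intro circle_invariant) (auto simp: norm_mult)
    finally show "cnj (f l (m * z)) = cnj (f (l * cnj z) m)" by simp
  qed (use assms(3,4) in auto)
  then show ?thesis by simp
qed

lemma taylor_coeffs_relation:
  assumes "cmod l * r \<le> 1" "cmod m * r \<le> 1" "1 < r"
  shows "m ^ n * (deriv ^^ n) (\<lambda>m. cnj (f l m)) 0 = cnj (l ^ n * (deriv ^^ n) (\<lambda>l. f l m) 0)"
proof -
  have "cmod l < 1" "cmod m < 1"
    using norm_less_one_of_scaled_le[OF assms(1,3)] norm_less_one_of_scaled_le[OF assms(2,3)] .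
  have "0 \<in> ball (0::complex) r" using assms(3) by simp
  have "(deriv ^^ n) (\<lambda>x. cnj (f l (m * x))) 0 = (deriv ^^ n) (\<lambda>x. cnj (f (l * cnj x) m)) 0"
    using invariance_off_circle[OF assms]
    by (intro higher_deriv_transform_within_open[OF holomorphic_on_dilate_right_cnj
          holomorphic_on_dilate_reflect_left, OF assms assms open_ball \<open>0 \<in> ball 0 r\<close>]) simp
  moreover have "(deriv ^^ n) (\<lambda>x. cnj (f l (m * x))) 0 = m ^ n * (deriv ^^ n) (\<lambda>m. cnj (f l m)) 0"
    using higher_deriv_compose_linear[OF holomorphic_right_cnj[OF \<open>cmod l < 1\<close>] open_ball open_ball
        \<open>0 \<in> ball 0 r\<close>] dilate_in_unit_ball[OF assms(2)] by simp
  moreover have "(deriv ^^ n) (\<lambda>x. f (l * x) m) 0 = l ^ n * (deriv ^^ n) (\<lambda>l. f l m) 0"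
    using higher_deriv_compose_linear[OF holomorphic_left[OF \<open>cmod m < 1\<close>] open_ball open_ball
        \<open>0 \<in> ball 0 r\<close>] dilate_in_unit_ball[OF assms(1)] by simp
  moreover have
    "(deriv ^^ n) (\<lambda>x. cnj (f (l * cnj x) m)) 0 = cnj ((deriv ^^ n) (\<lambda>x. f (l * x) m) 0)"
    using higher_deriv_cnj_cnj[OF holomorphic_on_dilate_left[OF assms] open_ball _ \<open>0 \<in> ball 0 r\<close>]
    by simp
  ultimately show ?thesis by simp
qed

theorem power_series_expansion:
  "\<exists>A. \<forall>l m. cmod l < 1 \<longrightarrow> cmod m < 1 \<longrightarrow> (\<lambda>n. A n * (l * cnj m) ^ n) sums f l m"
proof -
  define A where "A n = 2 ^ n * cnj ((deriv ^^ n) (\<lambda>m. cnj (f (1/2) m)) 0) / fact n" for n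
  have "(\<lambda>n. A n * (l * cnj m) ^ n) sums f l m" if "cmod l < 1" "cmod m < 1" for l m
  proof -
    define r where "r = 2 / (1 + cmod m)"
    have "cmod (1/2 :: complex) * r \<le> 1" "cmod m * r \<le> 1" "1 < r"
      using \<open>cmod m < 1\<close> add_pos_nonneg[OF zero_less_one norm_ge_zero[of m]]
      by (simp_all add: r_def field_simps)
    from arg_cong[OF taylor_coeffs_relation[OF this], of cnj]
    have "(deriv ^^ n) (\<lambda>l. f l m) 0 =
        2 ^ n * cnj ((deriv ^^ n) (\<lambda>m. cnj (f (1/2) m)) 0) * cnj m ^ n" for n
      by (simp add: field_simps)
    then have "(deriv ^^ n) (\<lambda>l. f l m) 0 / fact n * l ^ n = A n * (l * cnj m) ^ n" for n
      by (simp add: A_def power_mult_distrib)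
    with holomorphic_power_series[OF holomorphic_left[OF \<open>cmod m < 1\<close>], of l] \<open>cmod l < 1\<close>
    show ?thesis by simp
  qed
  then show ?thesis by blast
qed

end

section \<open>Unitarily invariant kernels on the ball\<close>

locale unitarily_invariant_ball_kernel =
  fixes k :: "complex ^ 'd \<Rightarrow> complex ^ 'd \<Rightarrow> complex"
  assumes holo_left: "w \<in> unit_ball \<Longrightarrow> holo_on unit_ball (\<lambda>z. k z w)"
    and holo_right_cnj: "z \<in> unit_ball \<Longrightarrow> holo_on unit_ball (\<lambda>w. cnj (k z w))"
    and unitary_invariant:
      "unitary u \<Longrightarrow> z \<in> unit_ball \<Longrightarrow> w \<in> unit_ball \<Longrightarrow> k (u *v z) (u *v w) = k z w"
begin

lemma circle_invariant_axis_restriction: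
  "circle_invariant_disc_kernel (\<lambda>l m. k (axis i l) (axis i m))"
proof
  fix l m t :: complex
  show "(\<lambda>l. k (axis i l) (axis i m)) holomorphic_on ball 0 1" if "cmod m < 1"
    using holomorphic_on_line[OF holo_left[of "axis i m"], of "ball 0 1" 0 "axis i 1"] that
    by (simp add: smult_axis_1 norm_axis)
  show "(\<lambda>m. cnj (k (axis i l) (axis i m))) holomorphic_on ball 0 1" if "cmod l < 1"
    using holomorphic_on_line[OF holo_right_cnj[of "axis i l"], of "ball 0 1" 0 "axis i 1"] that
    by (simp add: smult_axis_1 norm_axis)
  assume "cmod t = 1" "cmod l < 1" "cmod m < 1"
  have "axis i (1::complex) \<noteq> 0" by (simp add: axis_eq_0_iff)
  then have "phase_mat t (axis i 1) *v axis i c = axis i (t * c)" for c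
    using phase_mat_mult_vec_self[of "axis i 1" t c] by (simp add: smult_axis_1)
  then show "k (axis i (t * l)) (axis i (t * m)) = k (axis i l) (axis i m)"
    using unitary_invariant[OF unitary_phase_mat[OF \<open>cmod t = 1\<close> \<open>axis i 1 \<noteq> 0\<close>],
        of "axis i l" "axis i m"] \<open>cmod l < 1\<close> \<open>cmod m < 1\<close> by (simp add: norm_axis)
qed

lemma orthogonal_component_irrelevant:
  assumes "a + v \<in> unit_ball" "w \<in> unit_ball" "cinner a v = 0" "cinner w v = 0"
  shows "k (a + v) w = k a w"
proof (cases "v = 0")
  case False
  define S where "S = {t. a + t *s v \<in> unit_ball}"
  have circle: "a + t *s v \<in> unit_ball \<and> k (a + t *s v) w = k (a + v) w" if "cmod t = 1" for t
  proof -
    have "phase_mat t v *v (a + v) = a + t *s v"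
      using phase_mat_mult_vec_self[OF False, of t 1] phase_mat_mult_vec_orthogonal[OF assms(3)]
      by (simp add: matrix_vector_right_distrib)
    moreover have "phase_mat t v *v w = w" by (rule phase_mat_mult_vec_orthogonal[OF assms(4)])
    moreover have "unitary (phase_mat t v)" by (rule unitary_phase_mat[OF that False])
    ultimately show ?thesis
      using unitary_invariant[of "phase_mat t v", OF _ assms(1,2)]
        unitary_norm[of "phase_mat t v" "a + v"] assms(1) by simp
  qed
  have "convex S" unfolding S_def by (rule convex_line_section[OF convex_ball])
  moreover have "1 \<in> S" "-1 \<in> S" using circle[of 1] circle[of "-1"] by (auto simp: S_def)
  ultimately have "(1/2) *\<^sub>R 1 + (1/2) *\<^sub>R (-1) \<in> S" by (intro convexD) auto
  then have "0 \<in> S" by simp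
  have "k (a + 0 *s v) w = k (a + v) w"
  proof (rule holomorphic_eq_on_unit_circle
      [where f = "\<lambda>t. k (a + t *s v) w" and g = "\<lambda>_. k (a + v) w"])
    show "(\<lambda>t. k (a + t *s v) w) holomorphic_on S"
      by (rule holomorphic_on_line[OF holo_left[OF assms(2)]]) (simp add: S_def)
    show "open S" unfolding S_def by (rule open_line_section[OF open_ball])
    show "connected S" by (rule convex_connected[OF \<open>convex S\<close>])
  qed (use circle \<open>0 \<in> S\<close> in \<open>auto simp: S_def\<close>)
  then show ?thesis by simp
qed simp

theorem power_series_cinner:
  "\<exists>a. \<forall>z\<in>unit_ball. \<forall>w\<in>unit_ball. (\<lambda>n. a n * cinner z w ^ n) sums k z w"
proof -
  obtain i :: 'd where True by blast
  interpret axis: circle_invariant_disc_kernel "\<lambda>l m. k (axis i l) (axis i m)"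
    by (rule circle_invariant_axis_restriction)
  obtain A where A: "\<And>l m. cmod l < 1 \<Longrightarrow> cmod m < 1 \<Longrightarrow>
      (\<lambda>n. A n * (l * cnj m) ^ n) sums k (axis i l) (axis i m)"
    using axis.power_series_expansion by blast
  have "(\<lambda>n. A n * cinner z w ^ n) sums k z w" if "z \<in> unit_ball" "w \<in> unit_ball" for z w
  proof -
    define r where "r = complex_of_real (norm w)"
    obtain u where u: "unitary u" "u *v w = axis i r"
      using unitary_map_of_norm_eq[of w "axis i r"] by (auto simp: r_def norm_axis)
    define z' where "z' = u *v z"
    have "z' \<in> unit_ball" "cmod (z' $ i) < 1"
      using that(1) Finite_Cartesian_Product.norm_nth_le[of z' i]
      by (auto simp: z'_def unitary_norm[OF u(1)])
    have "cinner z w = cinner z' (axis i r)"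
      using unitary_cinner[OF u(1)] by (simp add: z'_def flip: u(2))
    also have "\<dots> = z' $ i * cnj r" by (rule cinner_axis_right)
    finally have cinner: "cinner z w = z' $ i * cnj r" .
    have "k z w = k z' (axis i r)" using unitary_invariant[OF u(1) that] by (simp add: z'_def u(2))
    also have "\<dots> = k (axis i (z' $ i) + (z' - axis i (z' $ i))) (axis i r)" by simp
    also have "\<dots> = k (axis i (z' $ i)) (axis i r)"
      using \<open>z' \<in> unit_ball\<close> that(2)
      by (intro orthogonal_component_irrelevant) (auto simp: cinner_axis_left norm_axis r_def)
    finally show ?thesis
      using A[OF \<open>cmod (z' $ i) < 1\<close>, of r] that(2) by (simp add: cinner r_def)
  qed
  then show ?thesis by blast
qed

end

section \<open>Positivity of the coefficients\<close>

definition root_unity :: "nat \<Rightarrow> complex" where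
  "root_unity N = exp (2 * of_real pi * \<i> / of_nat N)"

lemma root_unity_power: "root_unity N ^ m = exp (2 * of_real pi * \<i> * of_nat m / of_nat N)"
  unfolding root_unity_def exp_of_nat_mult[symmetric] by (simp add: mult_ac)

lemma norm_root_unity_power [simp]: "cmod (root_unity N ^ m) = 1"
  by (simp add: root_unity_def norm_power)

lemma root_unity_power_eq_iff:
  "N \<ge> 1 \<Longrightarrow> root_unity N ^ m = root_unity N ^ j \<longleftrightarrow> m mod N = j mod N"
  unfolding root_unity_power by (rule complex_root_unity_eq)

lemma root_unity_power_self: "N \<ge> 1 \<Longrightarrow> root_unity N ^ N = 1"
  unfolding root_unity_power using complex_root_unity_eq_1[of N N] by simp

lemma sum_powers_root_of_unity:
  fixes x :: "'a :: field"
  assumes "x ^ N = 1"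
  shows "(\<Sum>p<N. x ^ p) = (if x = 1 then of_nat N else 0)"
  using assms geometric_sum[of x N] by auto

lemma character_sum_root_unity:
  assumes "j < N"
  shows "(\<Sum>p<N. (cnj (root_unity N ^ j) * root_unity N ^ m) ^ p) =
    (if m mod N = j then of_nat N else 0)"
proof -
  let ?\<omega> = "root_unity N"
  have "N \<ge> 1" using assms by simp
  have unit: "cnj (?\<omega> ^ j) * ?\<omega> ^ j = 1"
    by (metis complex_norm_square mult.commute norm_root_unity_power of_real_1 power_one)
  have "(cnj (?\<omega> ^ j) * ?\<omega> ^ m) ^ N = cnj ((?\<omega> ^ N) ^ j) * (?\<omega> ^ N) ^ m"
    by (simp add: power_mult_distrib flip: power_mult complex_cnj_power) (simp add: mult.commute)
  then have "(cnj (?\<omega> ^ j) * ?\<omega> ^ m) ^ N = 1" by (simp add: root_unity_power_self[OF \<open>N \<ge> 1\<close>])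
  moreover have "cnj (?\<omega> ^ j) * ?\<omega> ^ m = 1 \<longleftrightarrow> ?\<omega> ^ m = ?\<omega> ^ j"
    using unit by (metis mult.commute mult.left_commute mult_1_right)
  ultimately show ?thesis
    using root_unity_power_eq_iff[OF \<open>N \<ge> 1\<close>, of m j] assms by (simp add: sum_powers_root_of_unity)
qed

lemma double_character_sum_root_unity:
  assumes "j < N"
  shows "(\<Sum>p<N. \<Sum>q<N. root_unity N ^ (j * q) * cnj (root_unity N ^ (j * p)) *
      (root_unity N ^ p * cnj (root_unity N ^ q)) ^ m) = (if m mod N = j then of_nat N ^ 2 else 0)"
proof -
  let ?\<omega> = "root_unity N"
  define x where "x = cnj (?\<omega> ^ j) * ?\<omega> ^ m"
  have "(\<Sum>p<N. \<Sum>q<N. ?\<omega> ^ (j * q) * cnj (?\<omega> ^ (j * p)) * (?\<omega> ^ p * cnj (?\<omega> ^ q)) ^ m) =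
      (\<Sum>p<N. \<Sum>q<N. x ^ p * cnj x ^ q)"
    by (intro sum.cong refl)
      (simp add: x_def power_mult_distrib mult_ac flip: power_mult complex_cnj_power)
  also have "\<dots> = (\<Sum>p<N. x ^ p) * cnj (\<Sum>q<N. x ^ q)"
    by (simp add: sum_product cnj_sum)
  also have "\<dots> = (if m mod N = j then of_nat N ^ 2 else 0)"
    unfolding x_def character_sum_root_unity[OF assms] by (simp add: power2_eq_square)
  finally show ?thesis .
qed

lemma tendsto_residue_class_suminf:
  fixes b :: "nat \<Rightarrow> 'a :: banach"
  assumes "summable (\<lambda>m. norm (b m))"
  shows "(\<lambda>N. \<Sum>m. if m mod N = j then b m else 0) \<longlonglongrightarrow> b j"
proof -
  have bound: "norm ((\<Sum>m. if m mod N = j then b m else 0) - b j) \<le> (\<Sum>i. norm (b (i + N)))"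
    if "j < N" for N
  proof -
    define d where "d m = (if m mod N = j \<and> m \<noteq> j then b m else 0)" for m
    have norm_d: "norm (d m) \<le> norm (b m)" for m by (simp add: d_def)
    then have "summable (\<lambda>m. norm (d m))" by (intro summable_comparison_test'[OF assms]) simp
    then have "d sums (\<Sum>m. d m)" by (simp add: summable_norm_cancel summable_sums)
    then have "(\<lambda>m. d m + (if m = j then b j else 0)) sums ((\<Sum>m. d m) + b j)"
      by (intro sums_add sums_single)
    moreover have "d m + (if m = j then b j else 0) = (if m mod N = j then b m else 0)" for m
      using that by (auto simp: d_def)
    ultimately have "(\<Sum>m. if m mod N = j then b m else 0) - b j = (\<Sum>m. d m)"
      by (simp add: sums_iff)
    also have "\<dots> = (\<Sum>i. d (i + N))"
    proof -
      have "d i = 0" if "i < N" for i using that by (simp add: d_def)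
      from sums_zero_iff_shift[of N d, OF this] \<open>d sums (\<Sum>m. d m)\<close>
      have "(\<lambda>i. d (i + N)) sums (\<Sum>m. d m)" by simp
      then show ?thesis by (rule sums_unique)
    qed
    finally have "norm ((\<Sum>m. if m mod N = j then b m else 0) - b j) = norm (\<Sum>i. d (i + N))" by simp
    also have "\<dots> \<le> (\<Sum>i. norm (d (i + N)))"
      by (intro summable_norm summable_ignore_initial_segment \<open>summable (\<lambda>m. norm (d m))\<close>)
    also have "\<dots> \<le> (\<Sum>i. norm (b (i + N)))"
      using norm_d
      by (intro suminf_le summable_ignore_initial_segment \<open>summable (\<lambda>m. norm (d m))\<close> assms)
    finally show ?thesis .
  qed
  have "(\<lambda>N. (\<Sum>m. if m mod N = j then b m else 0) - b j) \<longlonglongrightarrow> 0"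
  proof (rule Lim_null_comparison)
    show "\<forall>\<^sub>F N in sequentially. norm ((\<Sum>m. if m mod N = j then b m else 0) - b j)
        \<le> (\<Sum>i. norm (b (i + N)))"
      using eventually_gt_at_top[of j] by eventually_elim (rule bound)
    show "(\<lambda>N. \<Sum>i. norm (b (i + N))) \<longlonglongrightarrow> 0" by (rule suminf_exist_split2[OF assms])
  qed
  then show ?thesis by (rule LIM_zero_cancel)
qed

lemma nonneg_complex_limit:
  fixes L :: complex
  assumes "X \<longlonglongrightarrow> L" "\<forall>\<^sub>F n in sequentially. 0 \<le> X n"
  shows "0 \<le> L"
proof -
  have "\<forall>\<^sub>F n in sequentially. 0 \<le> Re (X n)" "\<forall>\<^sub>F n in sequentially. Im (X n) = 0"
    using assms(2) by (auto elim: eventually_mono simp: less_eq_complex_def)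
  then have "0 \<le> Re L" and Im: "(\<lambda>n. Im (X n)) \<longlonglongrightarrow> 0"
    using tendsto_Re[OF assms(1)]
    by (auto intro: tendsto_lowerbound Lim_transform_eventually[OF tendsto_const]
        elim: eventually_mono)
  moreover have "Im L = 0" using LIMSEQ_unique[OF tendsto_Im[OF assms(1)] Im] .
  ultimately show ?thesis by (simp add: less_eq_complex_def)
qed

lemma power_series_kernel_coeff_nonneg:
  fixes a :: "nat \<Rightarrow> complex" and k :: "complex \<Rightarrow> complex \<Rightarrow> complex"
  assumes series: "\<And>x y. cmod x < 1 \<Longrightarrow> cmod y < 1 \<Longrightarrow> (\<lambda>m. a m * (x * cnj y) ^ m) sums k x y"
    and nnd: "\<And>(N :: nat) x c. (\<forall>p<N. cmod (x p) < 1) \<Longrightarrow>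
      0 \<le> (\<Sum>p<N. \<Sum>q<N. c q * cnj (c p) * k (x p) (x q))"
  shows "0 \<le> a j"
proof -
  define b where "b m = a m * (1/4) ^ m" for m
  have "summable (\<lambda>m. a m * (9/16) ^ m)"
    using sums_summable[OF series[of "3/4" "3/4"]] by simp
  then have "summable (\<lambda>m. norm (b m))"
    unfolding b_def by (rule powser_insidea) simp
  (* With points omega^p / 2 and weights omega^(j q) only the terms with m = j mod N survive. *)
  have residue_nonneg: "0 \<le> (\<Sum>m. if m mod N = j then b m else 0)" if "j < N" for N
  proof -
    let ?\<omega> = "root_unity N"
    define x where "x p = ?\<omega> ^ p / 2" for p
    define c where "c q = ?\<omega> ^ (j * q)" for q
    define S where "S = (\<Sum>p<N. \<Sum>q<N. c q * cnj (c p) * k (x p) (x q))"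
    have "0 \<le> S" unfolding S_def by (rule nnd) (simp add: x_def norm_divide)
    have "(\<lambda>m. \<Sum>p<N. \<Sum>q<N. c q * cnj (c p) * (a m * (x p * cnj (x q)) ^ m)) sums S"
      unfolding S_def by (intro sums_sum sums_mult series) (simp_all add: x_def norm_divide)
    moreover have "(\<Sum>p<N. \<Sum>q<N. c q * cnj (c p) * (a m * (x p * cnj (x q)) ^ m)) =
        of_nat N ^ 2 * (if m mod N = j then b m else 0)" for m
    proof -
      have "(\<Sum>p<N. \<Sum>q<N. c q * cnj (c p) * (a m * (x p * cnj (x q)) ^ m)) =
          b m * (\<Sum>p<N. \<Sum>q<N. ?\<omega> ^ (j * q) * cnj (?\<omega> ^ (j * p)) * (?\<omega> ^ p * cnj (?\<omega> ^ q)) ^ m)"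
        by (simp add: b_def c_def x_def sum_distrib_left power_mult_distrib power_divide mult_ac)
      also have "\<dots> = of_nat N ^ 2 * (if m mod N = j then b m else 0)"
        unfolding double_character_sum_root_unity[OF that] by simp
      finally show ?thesis .
    qed
    ultimately have "(\<lambda>m. of_nat N ^ 2 * (if m mod N = j then b m else 0)) sums S" by simp
    then have "(\<lambda>m. if m mod N = j then b m else 0) sums (S / of_nat N ^ 2)"
      using that by (subst sums_mult_iff[of "of_nat N ^ 2", symmetric]) simp_all
    then have "(\<Sum>m. if m mod N = j then b m else 0) = of_real (1 / real N ^ 2) * S"
      by (simp add: sums_iff)
    also have "0 \<le> \<dots>"
      using \<open>0 \<le> S\<close> by (intro mult_nonneg_nonneg) (simp_all add: less_eq_complex_def)
    finally show ?thesis .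
  qed
  have "\<forall>\<^sub>F N in sequentially. 0 \<le> (\<Sum>m. if m mod N = j then b m else 0)"
    using eventually_gt_at_top[of j] by eventually_elim (rule residue_nonneg)
  then have "0 \<le> b j"
    by (rule nonneg_complex_limit[OF tendsto_residue_class_suminf[OF \<open>summable (\<lambda>m. norm (b m))\<close>]])
  then have "0 \<le> b j * of_real (4 ^ j)"
    by (intro mult_nonneg_nonneg) (simp_all add: less_eq_complex_def)
  also have "b j * of_real (4 ^ j) = a j" by (simp add: b_def field_simps)
  finally show ?thesis .
qed

lemma sums_vecI:
  assumes "\<And>i. (\<lambda>l. X l $ i) sums (Y $ i)"
  shows "X sums Y"
  using assms unfolding sums_def by (intro vec_tendstoI) (simp add: sum_component)

lemma sums_quadratic_form:
  assumes "\<And>i j. (\<lambda>l. a i j l * c ^ l) sums (M $ i $ j)"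
  shows "(\<lambda>l. cinner ((\<chi> i j. a i j l) *v x) x * c ^ l) sums cinner (M *v x) x"
proof -
  have lhs: "cinner ((\<chi> i j. a i j l) *v x) x * c ^ l =
      (\<Sum>i\<in>UNIV. (\<Sum>j\<in>UNIV. a i j l * c ^ l * x $ j) * cnj (x $ i))" for l
    by (simp add: cinner_def matrix_vector_mult_def sum_distrib_left sum_distrib_right mult_ac)
  have rhs: "cinner (M *v x) x = (\<Sum>i\<in>UNIV. (\<Sum>j\<in>UNIV. M $ i $ j * x $ j) * cnj (x $ i))"
    by (simp add: cinner_def matrix_vector_mult_def)
  show ?thesis unfolding lhs rhs by (intro sums_sum sums_mult2 assms)
qed

lemma nnd_kernel_coeffs_pos_def:
  fixes K :: "complex ^ 'd \<Rightarrow> complex ^ 'd \<Rightarrow> complex ^ 'n ^ 'n"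
  assumes "nnd_kernel K"
    and "\<And>i j z w. z \<in> unit_ball \<Longrightarrow> w \<in> unit_ball \<Longrightarrow>
      (\<lambda>l. a i j l * cinner z w ^ l) sums (K z w $ i $ j)"
  shows "pos_def_mat (\<chi> i j. a i j l)"
  unfolding pos_def_mat_def
proof
  fix x :: "complex ^ 'n"
  obtain e :: 'd where True by blast
  show "0 \<le> cinner ((\<chi> i j. a i j l) *v x) x"
  proof (rule power_series_kernel_coeff_nonneg
      [where k = "\<lambda>\<mu> \<nu>. cinner (K (axis e \<mu>) (axis e \<nu>) *v x) x"])
    fix \<mu> \<nu> :: complex assume "cmod \<mu> < 1" "cmod \<nu> < 1"
    then have "(\<lambda>l. a i j l * (\<mu> * cnj \<nu>) ^ l) sums (K (axis e \<mu>) (axis e \<nu>) $ i $ j)" for i j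
      using assms(2)[of "axis e \<mu>" "axis e \<nu>" i j] by (simp add: norm_axis cinner_axis_left)
    from sums_quadratic_form[OF this]
    show "(\<lambda>l. cinner ((\<chi> i j. a i j l) *v x) x * (\<mu> * cnj \<nu>) ^ l)
        sums cinner (K (axis e \<mu>) (axis e \<nu>) *v x) x" .
  next
    fix N :: nat and y c :: "nat \<Rightarrow> complex"
    assume "\<forall>p<N. cmod (y p) < 1"
    then have "0 \<le> (\<Sum>p<N. \<Sum>q<N. cinner (K (axis e (y p)) (axis e (y q)) *v (c q *s x)) (c p *s x))"
      using assms(1) unfolding nnd_kernel_def by (simp add: norm_axis)
    then show "0 \<le> (\<Sum>p<N. \<Sum>q<N. c q * cnj (c p) * cinner (K (axis e (y p)) (axis e (y q)) *v x) x)"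
      by (simp add: vector_scalar_commute cinner_smult_left cinner_smult_right mult_ac)
  qed
qed

theorem proposition4p7:
  fixes K :: "complex ^ 'd \<Rightarrow> complex ^ 'd \<Rightarrow> complex ^ 'n ^ 'n"
  assumes "sesqui_analytic K"
    and "nnd_kernel K"
    and "\<And>u z w. unitary u \<Longrightarrow> z \<in> unit_ball \<Longrightarrow> w \<in> unit_ball \<Longrightarrow>
           K (u *v z) (u *v w) = K z w"
  shows "\<exists>A :: nat \<Rightarrow> complex ^ 'n ^ 'n. (\<forall>l. pos_def_mat (A l)) \<and>
           (\<forall>z\<in>unit_ball. \<forall>w\<in>unit_ball.
              (\<lambda>l. \<chi> i j. A l $ i $ j * cinner z w ^ l) sums K z w)"
proof -
  have "\<exists>a. \<forall>z\<in>unit_ball. \<forall>w\<in>unit_ball. (\<lambda>l. a l * cinner z w ^ l) sums K z w $ i $ j" for i j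
  proof -
    interpret unitarily_invariant_ball_kernel "\<lambda>z w. K z w $ i $ j"
      using assms(1,3) by unfold_locales (auto simp: sesqui_analytic_def)
    show ?thesis by (rule power_series_cinner)
  qed
  then obtain a where a: "\<And>i j z w. z \<in> unit_ball \<Longrightarrow> w \<in> unit_ball \<Longrightarrow>
      (\<lambda>l. a i j l * cinner z w ^ l) sums K z w $ i $ j"
    by metis
  show ?thesis
  proof (intro exI[of _ "\<lambda>l. \<chi> i j. a i j l"] conjI allI ballI)
    show "pos_def_mat (\<chi> i j. a i j l)" for l by (rule nnd_kernel_coeffs_pos_def[OF assms(2) a])
    show "(\<lambda>l. \<chi> i j. (\<chi> i j. a i j l) $ i $ j * cinner z w ^ l) sums K z w"
      if "z \<in> unit_ball" "w \<in> unit_ball" for z w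
      using a[OF that] by (intro sums_vecI) simp
  qed
qed

end
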